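(* Let $G$ be a graph (simple, connected, locally finite, with edges of arbitrary positive lengths) and let $\mathcal{L}(G)$ be its line graph. Let $h:\mathcal{L}(G)\to G$ be the map defined below. Then $h$ is $1$-Lipschitz, i.e. $$d_G(h(x),h(y))\le d_{\mathcal{L}(G)}(x,y)\quad\text{for all } x,y\in\mathcal{L}(G).$$
   Context: Graphs are regarded as geodesic metric spaces: each edge $e$ of length $L(e)$ is identified with the real interval $[0,L(e)]$, so interior points of edges are points of the graph, and $d_G$ is the induced shortest-path distance. The line graph $\mathcal{L}(G)$ has a vertex $V_e$ for each edge $e$ of $G$, and an edge $[V_{e_i},V_{e_j}]$ whenever $e_i\neq e_j$ and $e_i\cap e_j\neq\varnothing$; the length of $[V_{e_i},V_{e_j}]$ is $(L(e_i)+L(e_j))/2$. For $e\in E(G)$, $Pm(e)$ denotes the midpoint of $e$. For an edge $[V_{e_i},V_{e_j}]$ of $\mathcal{L}(G)$, $Pm_{\mathcal{L}}([V_{e_i},V_{e_j}])$ denotes the point of that edge at distance $L(e_i)/2$ from $V_{e_i}$ (hence at distance $L(e_j)/2$ from $V_{e_j}$). The map $h$ is defined by $h(V_e)=Pm(e)$ and $h(Pm_{\mathcal{L}}([V_{e_i},V_{e_j}]))=$ the common vertex $e_i\cap e_j$ of $G$; and for a point $x_0$ in the interior of the segment from $V_e$ to $Pm_{\mathcal{L}}([V_e,V_{e_0}])$ (a segment of length $L(e)/2$), $h(x_0)$ is the point of the half-edge of $e$ from $Pm(e)$ to the vertex $e\cap e_0$ at distance $d(x_0,V_e)$ from $Pm(e)$.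 *)

theory Defs
  imports Complex_Main
begin

text \<open>A point of the metric graph
is either a vertex (Vtx v) or an interior point Mid u v t of the edge {u,v}, namely
the point at distance t from u, with 0 < t < L {u,v}.  (Mid u v t and Mid v u (L{u,v} - t)
denote the same point; the distance below identifies them.)\<close>

datatype 'v gpoint = Vtx 'v | Mid 'v 'v real

definition simple_graph :: "'v set \<Rightarrow> 'v set set \<Rightarrow> bool" where
  "simple_graph V E \<longleftrightarrow> (\<forall>e\<in>E. \<exists>u v. u \<noteq> v \<and> u \<in> V \<and> v \<in> V \<and> e = {u, v})"

definition locally_finite :: "'v set \<Rightarrow> 'v set set \<Rightarrow> bool" where
  "locally_finite V E \<longleftrightarrow> (\<forall>v\<in>V. finite {e\<in>E. v \<in> e})"

definition graph_connected :: "'v set \<Rightarrow> 'v set set \<Rightarrow> bool" where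
  "graph_connected V E \<longleftrightarrow>
     (\<forall>u\<in>V. \<forall>v\<in>V. (u, v) \<in> {(a, b). {a, b} \<in> E}\<^sup>*)"

definition positive_lengths :: "'v set set \<Rightarrow> ('v set \<Rightarrow> real) \<Rightarrow> bool" where
  "positive_lengths E L \<longleftrightarrow> (\<forall>e\<in>E. L e > 0)"

fun is_gpoint :: "'v set \<Rightarrow> 'v set set \<Rightarrow> ('v set \<Rightarrow> real) \<Rightarrow> 'v gpoint \<Rightarrow> bool" where
  "is_gpoint V E L (Vtx v) \<longleftrightarrow> v \<in> V"
| "is_gpoint V E L (Mid u v t) \<longleftrightarrow> {u, v} \<in> E \<and> u \<noteq> v \<and> 0 < t \<and> t < L {u, v}"

definition on_edge :: "'v set set \<Rightarrow> ('v set \<Rightarrow> real) \<Rightarrow> 'v gpoint \<Rightarrow> 'v \<Rightarrow> 'v \<Rightarrow> bool" where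
  "on_edge E L p u v \<longleftrightarrow> {u, v} \<in> E \<and> u \<noteq> v \<and>
     (p = Vtx u \<or> p = Vtx v \<or>
      (\<exists>t. 0 < t \<and> t < L {u, v} \<and> (p = Mid u v t \<or> p = Mid v u t)))"

definition pos :: "('v set \<Rightarrow> real) \<Rightarrow> 'v gpoint \<Rightarrow> 'v \<Rightarrow> 'v \<Rightarrow> real" where
  "pos L p u v = (case p of
       Vtx w \<Rightarrow> (if w = u then 0 else L {u, v})
     | Mid a b t \<Rightarrow> (if a = u then t else L {u, v} - t))"

inductive walk :: "'v set set \<Rightarrow> ('v set \<Rightarrow> real) \<Rightarrow> 'v gpoint \<Rightarrow> 'v gpoint \<Rightarrow> real \<Rightarrow> bool"
  for E L where
  walk_refl: "walk E L x x 0"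
| walk_step: "on_edge E L p u v \<Longrightarrow> on_edge E L q u v \<Longrightarrow> walk E L q y r \<Longrightarrow>
     walk E L p y (\<bar>pos L p u v - pos L q u v\<bar> + r)"

definition gdist :: "'v set set \<Rightarrow> ('v set \<Rightarrow> real) \<Rightarrow> 'v gpoint \<Rightarrow> 'v gpoint \<Rightarrow> real" where
  "gdist E L x y = Inf {r. walk E L x y r}"

definition line_edges :: "'v set set \<Rightarrow> 'v set set set" where
  "line_edges E = {{e, f} | e f. e \<in> E \<and> f \<in> E \<and> e \<noteq> f \<and> e \<inter> f \<noteq> {}}"

definition line_len :: "('v set \<Rightarrow> real) \<Rightarrow> 'v set set \<Rightarrow> real" where
  "line_len L \<epsilon> = (\<Sum>e\<in>\<epsilon>. L e) / 2"

definition other_end :: "'v set \<Rightarrow> 'v \<Rightarrow> 'v" where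
  "other_end e w = (THE u. u \<in> e \<and> u \<noteq> w)"

definition edge_mid :: "('v set \<Rightarrow> real) \<Rightarrow> 'v set \<Rightarrow> 'v gpoint" where
  "edge_mid L e = (let (u, v) = (SOME (u, v). u \<noteq> v \<and> e = {u, v}) in Mid u v (L e / 2))"

fun hmap :: "('v set \<Rightarrow> real) \<Rightarrow> 'v set gpoint \<Rightarrow> 'v gpoint" where
  "hmap L (Vtx e) = edge_mid L e"
| "hmap L (Mid e f t) =
     (let w = (THE w. w \<in> e \<inter> f) in
      if t = L e / 2 then Vtx w
      else if t < L e / 2 then Mid w (other_end e w) (L e / 2 - t)
      else Mid w (other_end f w) (t - L e / 2))"

end

(* If e = {w, a} and f = {w, c}, the map h carries the line-graph edge [V_e, V_f], of length
   (L e + L f) / 2, by arclength onto the path Pm(e) -- w -- Pm(f) of the same length.  Hence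
   every walk in L(G) is carried to a walk in G of the same length, and taking infima gives
   the inequality.  Connectedness of G only ensures that L(G) has walks between any two
   points at all. *)

theory Submission
  imports Defs
begin

lemma walk_append:
  assumes "walk E L x y r" "walk E L y z s"
  shows "walk E L x z (r + s)"
  using assms
proof (induction rule: walk.induct)
  case (walk_refl x)
  then show ?case by simp
next
  case (walk_step p u v q y r)
  then have "walk E L p z (\<bar>pos L p u v - pos L q u v\<bar> + (r + s))"
    by (intro walk.walk_step) auto
  then show ?case by (simp add: add.assoc)
qed

lemma walk_nonneg: "walk E L x y r \<Longrightarrow> 0 \<le> r"
  by (induction rule: walk.induct) auto

lemma walk_single_edge:
  assumes "on_edge E L p u v" "on_edge E L q u v"
  shows "walk E L p q \<bar>pos L p u v - pos L q u v\<bar>"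
  using walk.walk_step[OF assms walk.walk_refl] by simp

lemma walk_through_vertex:
  assumes "on_edge E L x w a" "on_edge E L y w c"
  shows "walk E L x y (\<bar>pos L x w a\<bar> + \<bar>pos L y w c\<bar>)"
proof -
  have "on_edge E L (Vtx w) w a" "on_edge E L (Vtx w) w c"
    "pos L (Vtx w) w a = 0" "pos L (Vtx w) w c = 0"
    using assms by (auto simp: on_edge_def pos_def)
  then have "walk E L x (Vtx w) \<bar>pos L x w a\<bar>" "walk E L (Vtx w) y \<bar>pos L y w c\<bar>"
    using walk_single_edge[of E L x w a "Vtx w"] walk_single_edge[of E L "Vtx w" w c y] assms
    by simp_all
  then show ?thesis by (rule walk_append)
qed

(* The first hypothesis matters: the infimum of the empty set is an unspecified value. *)
lemma gdist_le_gdist_by_walks: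
  assumes "\<exists>r. walk E' L' x' y' r"
    and "\<And>r. walk E' L' x' y' r \<Longrightarrow> walk E L x y r"
  shows "gdist E L x y \<le> gdist E' L' x' y'"
  unfolding gdist_def
proof (rule cInf_greatest)
  show "{r. walk E' L' x' y' r} \<noteq> {}" using assms(1) by blast
next
  fix r assume "r \<in> {r. walk E' L' x' y' r}"
  then show "Inf {r. walk E L x y r} \<le> r"
    using assms(2) walk_nonneg by (intro cInf_lower bdd_belowI[of _ 0]) auto
qed

lemma on_edge_commute: "on_edge E L p v u \<longleftrightarrow> on_edge E L p u v"
  unfolding on_edge_def by (auto simp: insert_commute)

lemma pos_commute:
  assumes "on_edge E L p u v"
  shows "pos L p v u = L {u, v} - pos L p u v"
  using assms unfolding on_edge_def pos_def by (auto simp: insert_commute)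

lemma other_end_doubleton: "w \<noteq> a \<Longrightarrow> other_end {w, a} w = a"
  unfolding other_end_def by auto

lemma hmap_Mid_adjacent_edges:
  assumes "w \<noteq> a" "w \<noteq> c" "a \<noteq> c"
  shows "hmap L (Mid {w, a} {w, c} t) =
    (if t = L {w, a} / 2 then Vtx w
     else if t < L {w, a} / 2 then Mid w a (L {w, a} / 2 - t)
     else Mid w c (t - L {w, a} / 2))"
proof -
  have "(THE x. x \<in> {w, a} \<inter> {w, c}) = w" using assms by auto
  then show ?thesis using assms by (simp add: other_end_doubleton)
qed

lemma edge_mid_on_edge:
  assumes "{w, a} \<in> E" "w \<noteq> a" "0 < L {w, a}"
  shows "on_edge E L (edge_mid L {w, a}) w a
    \<and> pos L (edge_mid L {w, a}) w a = L {w, a} / 2"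
proof -
  let ?P = "\<lambda>(u, v). u \<noteq> v \<and> {w, a} = {u, v}"
  obtain u v where uv: "(SOME uv. ?P uv) = (u, v)" by fastforce
  have "?P (w, a)" using assms(2) by simp
  then have "?P (SOME uv. ?P uv)" by (rule someI)
  then have "?P (u, v)" unfolding uv .
  then have "edge_mid L {w, a} = Mid u v (L {w, a} / 2)" "(u, v) = (w, a) \<or> (u, v) = (a, w)"
    using uv by (auto simp: edge_mid_def doubleton_eq_iff)
  then show ?thesis
    using assms unfolding on_edge_def pos_def
    by (auto simp: insert_commute intro!: exI[of _ "L {w, a} / 2"])
qed

lemma hmap_first_half:
  assumes "{w, a} \<in> E" "w \<noteq> a" "w \<noteq> c" "a \<noteq> c"
    and "0 < L {w, a}" "0 < L {w, c}"
    and p: "on_edge (line_edges E) (line_len L) p {w, a} {w, c}"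
    and half: "pos (line_len L) p {w, a} {w, c} \<le> L {w, a} / 2"
  shows "on_edge E L (hmap L p) w a
    \<and> pos L (hmap L p) w a = L {w, a} / 2 - pos (line_len L) p {w, a} {w, c}"
proof -
  have ef: "{w, a} \<noteq> {w, c}" using assms by (auto simp: doubleton_eq_iff)
  have len: "line_len L {{w, a}, {w, c}} = L {w, a} / 2 + L {w, c} / 2"
    using ef by (simp add: line_len_def)
  from p consider "p = Vtx {w, a}" | "p = Vtx {w, c}"
    | t where "0 < t" "t < line_len L {{w, a}, {w, c}}" "p = Mid {w, a} {w, c} t"
    | t where "0 < t" "t < line_len L {{w, a}, {w, c}}" "p = Mid {w, c} {w, a} t"
    unfolding on_edge_def by blast
  then show ?thesis
  proof cases
    case 1
    then show ?thesis using edge_mid_on_edge[of w a E L] assms(1,2,5) by (simp add: pos_def)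
  next
    case 2
    then show ?thesis using half ef len assms(6) by (simp add: pos_def)
  next
    case (3 t)
    then show ?thesis using half ef len assms(1,2)
      unfolding 3(3) hmap_Mid_adjacent_edges[OF assms(2-4)] by (auto simp: pos_def on_edge_def)
  next
    case (4 t)
    then show ?thesis using half ef len assms(1,2)
      unfolding 4(3) hmap_Mid_adjacent_edges[OF assms(3,2) assms(4)[symmetric]]
      by (auto simp: pos_def on_edge_def)
  qed
qed

lemma hmap_second_half:
  assumes "{w, c} \<in> E" "w \<noteq> a" "w \<noteq> c" "a \<noteq> c"
    and "0 < L {w, a}" "0 < L {w, c}"
    and p: "on_edge (line_edges E) (line_len L) p {w, a} {w, c}"
    and half: "L {w, a} / 2 \<le> pos (line_len L) p {w, a} {w, c}"
  shows "on_edge E L (hmap L p) w c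
    \<and> pos L (hmap L p) w c = pos (line_len L) p {w, a} {w, c} - L {w, a} / 2"
proof -
  \<comment> \<open>Seen from V_f instead of V_e, this is the first half with a and c exchanged.\<close>
  have "{w, a} \<noteq> {w, c}" using assms by (auto simp: doubleton_eq_iff)
  then have len: "line_len L {{w, c}, {w, a}} = L {w, a} / 2 + L {w, c} / 2"
    by (simp add: line_len_def)
  have p': "on_edge (line_edges E) (line_len L) p {w, c} {w, a}"
    using p by (simp add: on_edge_commute)
  have "pos (line_len L) p {w, c} {w, a}
      = line_len L {{w, c}, {w, a}} - pos (line_len L) p {w, a} {w, c}"
    using pos_commute[OF p] by (simp add: insert_commute)
  with len half have "pos (line_len L) p {w, c} {w, a} \<le> L {w, c} / 2"
    and "L {w, c} / 2 - pos (line_len L) p {w, c} {w, a}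
      = pos (line_len L) p {w, a} {w, c} - L {w, a} / 2"
    by simp_all
  with hmap_first_half[OF assms(1,3,2) assms(4)[symmetric] assms(6,5) p'] show ?thesis
    by simp
qed

lemma line_edge_adjacent_edges:
  assumes "simple_graph V E" "{e, f} \<in> line_edges E" "e \<noteq> f"
  obtains w a c where "e = {w, a}" "f = {w, c}" "{w, a} \<in> E" "{w, c} \<in> E"
    "w \<noteq> a" "w \<noteq> c" "a \<noteq> c"
proof -
  have ef: "e \<in> E" "f \<in> E" "e \<inter> f \<noteq> {}"
    using assms(2) unfolding line_edges_def by (auto simp: doubleton_eq_iff)
  with assms(1) obtain u v x y where "e = {u, v}" "u \<noteq> v" "f = {x, y}" "x \<noteq> y"
    unfolding simple_graph_def by meson
  with assms(3) ef(3) have "\<exists>w a c. e = {w, a} \<and> f = {w, c} \<and> w \<noteq> a \<and> w \<noteq> c \<and> a \<noteq> c"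
    by (auto simp: insert_commute)
  with ef that show ?thesis by blast
qed

lemma walk_hmap_line_edge:
  assumes "simple_graph V E" "positive_lengths E L"
    and p: "on_edge (line_edges E) (line_len L) p e f"
    and q: "on_edge (line_edges E) (line_len L) q e f"
  shows "walk E L (hmap L p) (hmap L q)
    \<bar>pos (line_len L) p e f - pos (line_len L) q e f\<bar>"
proof -
  obtain w a c where wac: "e = {w, a}" "f = {w, c}" "{w, a} \<in> E" "{w, c} \<in> E"
    "w \<noteq> a" "w \<noteq> c" "a \<noteq> c"
    using line_edge_adjacent_edges[OF assms(1)] p unfolding on_edge_def by metis
  have pos_len: "0 < L {w, a}" "0 < L {w, c}"
    using assms(2) wac(3,4) unfolding positive_lengths_def by auto
  note first = hmap_first_half[OF wac(3,5-7) pos_len, folded wac(1,2)]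
  note second = hmap_second_half[OF wac(4-7) pos_len, folded wac(1,2)]
  define s s' h where "s = pos (line_len L) p e f" and "s' = pos (line_len L) q e f"
    and "h = L e / 2"
  consider "s \<le> h" "s' \<le> h" | "h \<le> s" "h \<le> s'" | "s \<le> h" "h \<le> s'" | "h \<le> s" "s' \<le> h"
    by linarith
  then show ?thesis
  proof cases
    case 1
    then show ?thesis
      using walk_single_edge[of E L "hmap L p" w a "hmap L q"] first[OF p] first[OF q]
      unfolding s_def s'_def h_def wac(1) by (simp add: abs_minus_commute)
  next
    case 2
    then show ?thesis
      using walk_single_edge[of E L "hmap L p" w c "hmap L q"] second[OF p] second[OF q]
      unfolding s_def s'_def h_def wac(1) by simp
  next
    case 3
    then have "walk E L (hmap L p) (hmap L q) (\<bar>h - s\<bar> + \<bar>s' - h\<bar>)"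
      using walk_through_vertex[of E L "hmap L p" w a "hmap L q" c] first[OF p] second[OF q]
      unfolding s_def s'_def h_def wac(1) by simp
    moreover have "\<bar>h - s\<bar> + \<bar>s' - h\<bar> = \<bar>s - s'\<bar>" using 3 by arith
    ultimately show ?thesis unfolding s_def s'_def by simp
  next
    case 4
    then have "walk E L (hmap L p) (hmap L q) (\<bar>s - h\<bar> + \<bar>h - s'\<bar>)"
      using walk_through_vertex[of E L "hmap L p" w c "hmap L q" a] second[OF p] first[OF q]
      unfolding s_def s'_def h_def wac(1) by simp
    moreover have "\<bar>s - h\<bar> + \<bar>h - s'\<bar> = \<bar>s - s'\<bar>" using 4 by arith
    ultimately show ?thesis unfolding s_def s'_def by simp
  qed
qed

lemma walk_hmap:
  assumes "simple_graph V E" "positive_lengths E L"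
  shows "walk (line_edges E) (line_len L) x y r \<Longrightarrow> walk E L (hmap L x) (hmap L y) r"
proof (induction rule: walk.induct)
  case (walk_refl x)
  show ?case by (rule walk.walk_refl)
next
  case (walk_step p e f q y r)
  then show ?case
    using walk_append[OF walk_hmap_line_edge[OF assms walk_step(1,2)]] by blast
qed

lemma walk_line_graph_adjacent:
  assumes "e \<in> E" "f \<in> E" "e \<inter> f \<noteq> {}"
  shows "\<exists>r. walk (line_edges E) (line_len L) (Vtx e) (Vtx f) r"
proof (cases "e = f")
  case True
  then show ?thesis using walk.walk_refl by blast
next
  case False
  then have "on_edge (line_edges E) (line_len L) (Vtx e) e f"
    "on_edge (line_edges E) (line_len L) (Vtx f) e f"
    using assms unfolding on_edge_def line_edges_def by blast+
  from walk_single_edge[OF this] show ?thesis by blast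
qed

lemma walk_line_graph_rtrancl:
  assumes "(a, b) \<in> {(a, b). {a, b} \<in> E}\<^sup>*" "e \<in> E" "f \<in> E" "a \<in> e" "b \<in> f"
  shows "\<exists>r. walk (line_edges E) (line_len L) (Vtx e) (Vtx f) r"
  using assms
proof (induction arbitrary: f rule: rtrancl_induct)
  case base
  then show ?case using walk_line_graph_adjacent by blast
next
  case (step b c)
  then have bc: "{b, c} \<in> E" by simp
  with step obtain r where "walk (line_edges E) (line_len L) (Vtx e) (Vtx {b, c}) r"
    by blast
  moreover obtain s where "walk (line_edges E) (line_len L) (Vtx {b, c}) (Vtx f) s"
    using walk_line_graph_adjacent[OF bc \<open>f \<in> E\<close>] \<open>c \<in> f\<close> by blast
  ultimately show ?case using walk_append by blast
qed

lemma walk_line_graph_point_vertex: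
  assumes "is_gpoint E (line_edges E) (line_len L) x"
  obtains e where "e \<in> E" "\<exists>r. walk (line_edges E) (line_len L) x (Vtx e) r"
    "\<exists>r. walk (line_edges E) (line_len L) (Vtx e) x r"
proof (cases x)
  case (Vtx e)
  then show ?thesis using assms that walk.walk_refl[of "line_edges E" "line_len L" x] by auto
next
  case (Mid e f t)
  with assms have "e \<in> E" and x: "on_edge (line_edges E) (line_len L) x e f"
    and e: "on_edge (line_edges E) (line_len L) (Vtx e) e f"
    unfolding line_edges_def on_edge_def by (auto simp: doubleton_eq_iff)
  then show ?thesis using that walk_single_edge[OF x e] walk_single_edge[OF e x] by blast
qed

lemma line_graph_walk_exists:
  assumes "simple_graph V E" "graph_connected V E"
    and "is_gpoint E (line_edges E) (line_len L) x" "is_gpoint E (line_edges E) (line_len L) y"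
  shows "\<exists>r. walk (line_edges E) (line_len L) x y r"
proof -
  obtain e r1 where e: "e \<in> E" "walk (line_edges E) (line_len L) x (Vtx e) r1"
    using walk_line_graph_point_vertex[OF assms(3)] by metis
  obtain f r3 where f: "f \<in> E" "walk (line_edges E) (line_len L) (Vtx f) y r3"
    using walk_line_graph_point_vertex[OF assms(4)] by metis
  obtain a a' b b' where "e = {a, a'}" "a \<in> V" "f = {b, b'}" "b \<in> V"
    using assms(1) e(1) f(1) unfolding simple_graph_def by meson
  moreover from this have "(a, b) \<in> {(a, b). {a, b} \<in> E}\<^sup>*"
    using assms(2) unfolding graph_connected_def by blast
  ultimately obtain r2 where "walk (line_edges E) (line_len L) (Vtx e) (Vtx f) r2"
    using walk_line_graph_rtrancl[of a b E e f L] e(1) f(1) by blast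
  with e(2) f(2) show ?thesis using walk_append by blast
qed

theorem mainTheorem1:
  fixes V :: "'v set" and E :: "'v set set" and L :: "'v set \<Rightarrow> real"
  assumes "simple_graph V E" and "graph_connected V E" and "locally_finite V E"
    and "positive_lengths E L"
    and "is_gpoint E (line_edges E) (line_len L) x"
    and "is_gpoint E (line_edges E) (line_len L) y"
  shows "gdist E L (hmap L x) (hmap L y)
           \<le> gdist (line_edges E) (line_len L) x y"
  using line_graph_walk_exists[OF assms(1,2,5,6)] walk_hmap[OF assms(1,4)]
  by (rule gdist_le_gdist_by_walks)

end
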